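(* Let $\mathcal{C}$ be a prevariety over a finite alphabet $A$ and let $\alpha:A^*\to M$ be a surjective morphism into a finite monoid. For every idempotent $e\in M$, the $\mathcal{C}$-orbit of $e$ for $\alpha$ is a subsemigroup of $M$; moreover, it is a monoid whose neutral element is $e$.
   Context: Fix a finite alphabet $A$. A prevariety is a class of regular languages over $A$ containing $\emptyset$ and $A^*$, closed under union, intersection, complement, and under the quotients $u^{-1}L=\{w\mid uw\in L\}$ and $Lu^{-1}=\{w\mid wu\in L\}$. A language $L_1$ is $\mathcal{C}$-separable from $L_2$ if some $K\in\mathcal{C}$ satisfies $L_1\subseteq K$ and $K\cap L_2=\emptyset$. For a morphism $\alpha:A^*\to M$, $(s,t)\in M^2$ is a $\mathcal{C}$-pair if $\alpha^{-1}(s)$ is not $\mathcal{C}$-separable from $\alpha^{-1}(t)$. For an idempotent $e\in M$, the $\mathcal{C}$-orbit of $e$ for $\alpha$ is $\{ese\mid s\in M,\ (e,s)\text{ is a }\mathcal{C}\text{-pair}\}$. *)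

theory Defs
  imports Main
begin

definition regular :: "'a list set \<Rightarrow> bool" where
  "regular L \<longleftrightarrow> (\<exists>(Q::nat set) q0 (delta :: nat \<Rightarrow> 'a \<Rightarrow> nat) F.
      finite Q \<and> q0 \<in> Q \<and> (\<forall>q\<in>Q. \<forall>a. delta q a \<in> Q) \<and> F \<subseteq> Q \<and>
      L = {w. foldl delta q0 w \<in> F})"

definition left_quot :: "'a list \<Rightarrow> 'a list set \<Rightarrow> 'a list set" where
  "left_quot u L = {w. u @ w \<in> L}"

definition right_quot :: "'a list set \<Rightarrow> 'a list \<Rightarrow> 'a list set" where
  "right_quot L u = {w. w @ u \<in> L}"

definition prevariety :: "'a list set set \<Rightarrow> bool" where
  "prevariety C \<longleftrightarrow>
     (\<forall>L\<in>C. regular L) \<and> {} \<in> C \<and> UNIV \<in> C \<and>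
     (\<forall>K\<in>C. \<forall>L\<in>C. K \<union> L \<in> C) \<and>
     (\<forall>K\<in>C. \<forall>L\<in>C. K \<inter> L \<in> C) \<and>
     (\<forall>L\<in>C. - L \<in> C) \<and>
     (\<forall>L\<in>C. \<forall>u. left_quot u L \<in> C \<and> right_quot L u \<in> C)"

definition separable :: "'a list set set \<Rightarrow> 'a list set \<Rightarrow> 'a list set \<Rightarrow> bool" where
  "separable C L1 L2 \<longleftrightarrow> (\<exists>K\<in>C. L1 \<subseteq> K \<and> K \<inter> L2 = {})"

definition monoid_morphism :: "('a list \<Rightarrow> 'm::monoid_mult) \<Rightarrow> bool" where
  "monoid_morphism \<alpha> \<longleftrightarrow> \<alpha> [] = 1 \<and> (\<forall>u v. \<alpha> (u @ v) = \<alpha> u * \<alpha> v)"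

definition C_pair :: "'a list set set \<Rightarrow> ('a list \<Rightarrow> 'm) \<Rightarrow> 'm \<Rightarrow> 'm \<Rightarrow> bool" where
  "C_pair C \<alpha> s t \<longleftrightarrow> \<not> separable C (\<alpha> -` {s}) (\<alpha> -` {t})"

definition C_orbit :: "'a list set set \<Rightarrow> ('a list \<Rightarrow> 'm::monoid_mult) \<Rightarrow> 'm \<Rightarrow> 'm set" where
  "C_orbit C \<alpha> e = {e * s * e | s. C_pair C \<alpha> e s}"

end

theory Submission
  imports Defs
begin

text \<open>The heart of the argument is that \<open>\<C>\<close>-pairs are compatible with multiplication: if
\<open>(s, t)\<close> and \<open>(s', t')\<close> are \<open>\<C>\<close>-pairs, so is \<open>(s s', t t')\<close>. Suppose \<open>K \<in> \<C>\<close> separated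
\<open>\<alpha>\<^sup>-\<^sup>1(s s')\<close> from \<open>\<alpha>\<^sup>-\<^sup>1(t t')\<close>. The intersection \<open>H\<close> of the quotients \<open>u\<^sup>-\<^sup>1 K\<close> with \<open>\<alpha> u = s\<close>
is a finite intersection, because a regular language has only finitely many left quotients,
so \<open>H \<in> \<C>\<close>; it contains \<open>\<alpha>\<^sup>-\<^sup>1(s')\<close> and hence some \<open>w'\<close> with \<open>\<alpha> w' = t'\<close>. Then \<open>K w'\<^sup>-\<^sup>1 \<in> \<C>\<close>
contains \<open>\<alpha>\<^sup>-\<^sup>1(s)\<close> and hence some \<open>u'\<close> with \<open>\<alpha> u' = t\<close>, so \<open>u' w' \<in> K \<inter> \<alpha>\<^sup>-\<^sup>1(t t')\<close>, a
contradiction. Since \<open>(e, e)\<close> is a \<open>\<C>\<close>-pair, combining \<open>(e, s)\<close>, \<open>(e, e)\<close> and \<open>(e, t)\<close> shows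
that \<open>(e, s e t)\<close> is a \<open>\<C>\<close>-pair, so \<open>(e s e)(e t e) = e (s e t) e\<close> lies in the orbit.\<close>

lemma foldl_in_closed:
  assumes "\<forall>q\<in>Q. \<forall>a. delta q a \<in> Q" and "q \<in> Q"
  shows "foldl delta q w \<in> Q"
  using assms(2) by (induction w arbitrary: q) (auto simp: assms(1))

lemma regular_finite_left_quots:
  assumes "regular K"
  shows "finite (range (\<lambda>u. left_quot u K))"
proof -
  obtain Q :: "nat set" and q0 delta F where
    Q: "finite Q" "q0 \<in> Q" "\<forall>q\<in>Q. \<forall>a. delta q a \<in> Q" and K: "K = {w. foldl delta q0 w \<in> F}"
    using assms unfolding regular_def by blast
  have "range (\<lambda>u. left_quot u K) \<subseteq> (\<lambda>q. {w. foldl delta q w \<in> F}) ` Q"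
  proof
    fix X assume "X \<in> range (\<lambda>u. left_quot u K)"
    then obtain u where "X = left_quot u K" by blast
    then have "X = {w. foldl delta (foldl delta q0 u) w \<in> F}"
      by (simp add: left_quot_def K)
    moreover have "foldl delta q0 u \<in> Q" using foldl_in_closed Q(2,3) by metis
    ultimately show "X \<in> (\<lambda>q. {w. foldl delta q w \<in> F}) ` Q" by blast
  qed
  then show ?thesis using Q(1) by (rule finite_subset[OF _ finite_imageI])
qed

lemma prevariety_Inter_closed:
  assumes "prevariety C" and "finite S" and "S \<subseteq> C"
  shows "\<Inter>S \<in> C"
  using assms(2,3) by (induction S rule: finite_induct) (use assms(1) in \<open>auto simp: prevariety_def\<close>)

lemma prevariety_Inter_left_quots:
  assumes "prevariety C" and "K \<in> C"
  shows "(\<Inter>u\<in>U. left_quot u K) \<in> C"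
proof (rule prevariety_Inter_closed[OF assms(1)])
  have "regular K" using assms unfolding prevariety_def by blast
  then show "finite ((\<lambda>u. left_quot u K) ` U)"
    by (rule finite_subset[OF image_mono[OF subset_UNIV] regular_finite_left_quots])
  show "(\<lambda>u. left_quot u K) ` U \<subseteq> C" using assms unfolding prevariety_def by blast
qed

lemma C_pair_mult:
  assumes C: "prevariety C" and \<alpha>: "monoid_morphism \<alpha>"
    and st: "C_pair C \<alpha> s t" and st': "C_pair C \<alpha> s' t'"
  shows "C_pair C \<alpha> (s * s') (t * t')"
proof (rule ccontr)
  have \<alpha>_append: "\<alpha> (u @ w) = \<alpha> u * \<alpha> w" for u w
    using \<alpha> unfolding monoid_morphism_def by blast
  assume "\<not> C_pair C \<alpha> (s * s') (t * t')"
  then obtain K where K: "K \<in> C" "\<alpha> -` {s * s'} \<subseteq> K" "K \<inter> \<alpha> -` {t * t'} = {}"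
    unfolding C_pair_def separable_def by blast
  define H where "H = (\<Inter>u\<in>\<alpha> -` {s}. left_quot u K)"
  have "H \<in> C" unfolding H_def by (rule prevariety_Inter_left_quots[OF C K(1)])
  moreover have "\<alpha> -` {s'} \<subseteq> H"
    using K(2) by (auto simp: H_def left_quot_def \<alpha>_append)
  ultimately obtain w' where w': "w' \<in> H" "\<alpha> w' = t'"
    using st' unfolding C_pair_def separable_def by blast
  have "right_quot K w' \<in> C" using C K(1) unfolding prevariety_def by blast
  moreover have "\<alpha> -` {s} \<subseteq> right_quot K w'"
    using w'(1) by (auto simp: H_def left_quot_def right_quot_def)
  ultimately obtain u' where u': "u' @ w' \<in> K" "\<alpha> u' = t"
    using st unfolding C_pair_def separable_def right_quot_def by blast
  then have "u' @ w' \<in> K \<inter> \<alpha> -` {t * t'}" using w'(2) by (simp add: \<alpha>_append)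
  then show False using K(3) by blast
qed

lemma C_pair_refl:
  assumes "s \<in> range \<alpha>"
  shows "C_pair C \<alpha> s s"
  using assms unfolding C_pair_def separable_def by blast

lemma idem_mult_absorb:
  fixes e :: "'m::monoid_mult"
  assumes "e * e = e"
  shows "e * (e * z) = e * z"
  by (simp add: assms flip: mult.assoc)

lemma C_orbit_mult_closed:
  assumes C: "prevariety C" and \<alpha>: "monoid_morphism \<alpha>"
    and e: "e \<in> range \<alpha>" "e * e = e"
    and x: "x \<in> C_orbit C \<alpha> e" and y: "y \<in> C_orbit C \<alpha> e"
  shows "x * y \<in> C_orbit C \<alpha> e"
proof -
  obtain s t where st: "x = e * s * e" "C_pair C \<alpha> e s" "y = e * t * e" "C_pair C \<alpha> e t"
    using x y unfolding C_orbit_def by blast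
  have "C_pair C \<alpha> e (s * e)"
    using C_pair_mult[OF C \<alpha> st(2) C_pair_refl[OF e(1)]] e(2) by simp
  from C_pair_mult[OF C \<alpha> this st(4)] have "C_pair C \<alpha> e (s * e * t)"
    using e(2) by simp
  moreover have "x * y = e * (s * e * t) * e"
    using st(1,3) by (simp add: mult.assoc idem_mult_absorb[OF e(2)])
  ultimately show ?thesis unfolding C_orbit_def by blast
qed

lemma idem_in_C_orbit:
  assumes "e \<in> range \<alpha>" and "e * e = e"
  shows "e \<in> C_orbit C \<alpha> e"
  using C_pair_refl[OF assms(1)] assms(2) unfolding C_orbit_def by force

lemma C_orbit_idem_neutral:
  assumes "e * e = e" and "x \<in> C_orbit C \<alpha> e"
  shows "e * x = x" and "x * e = x"
  using assms unfolding C_orbit_def by (auto simp: mult.assoc idem_mult_absorb)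

theorem lemma5p5:
  fixes C :: "('a::finite) list set set"
    and \<alpha> :: "'a list \<Rightarrow> 'm::{monoid_mult, finite}"
    and e :: 'm
  assumes "prevariety C"
    and "monoid_morphism \<alpha>"
    and "surj \<alpha>"
    and "e * e = e"
  shows "(\<forall>x\<in>C_orbit C \<alpha> e. \<forall>y\<in>C_orbit C \<alpha> e. x * y \<in> C_orbit C \<alpha> e)
       \<and> e \<in> C_orbit C \<alpha> e
       \<and> (\<forall>x\<in>C_orbit C \<alpha> e. e * x = x \<and> x * e = x)"
proof -
  have e: "e \<in> range \<alpha>" using assms(3) by simp
  show ?thesis
  proof (intro conjI ballI)
    show "x * y \<in> C_orbit C \<alpha> e" if "x \<in> C_orbit C \<alpha> e" "y \<in> C_orbit C \<alpha> e" for x y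
      using C_orbit_mult_closed[OF assms(1,2) e assms(4) that] .
    show "e \<in> C_orbit C \<alpha> e" using idem_in_C_orbit[OF e assms(4)] .
    show "e * x = x" "x * e = x" if "x \<in> C_orbit C \<alpha> e" for x
      using C_orbit_idem_neutral[OF assms(4) that] by simp_all
  qed
qed

end
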